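(* Let $\{c_n\}_{n\ge1}$ be a real sequence and $\{d_{n+1}\}_{n\ge1}$ a positive chain sequence having multiple parameter sequences, and let $P_0(x)=1$, $P_1(x)=x-c_1$, $P_{n+1}(x)=(x-c_{n+1})P_n(x)-d_{n+1}(x^2+1)P_{n-1}(x)$ for $n\ge1$. Let $\{M_{n+1}\}_{n\ge0}$ be the maximal parameter sequence of $\{d_{n+1}\}_{n\ge1}$, let $\tau_0=1$ and $\tau_n=\tau_{n-1}(1-ic_n)/(1+ic_n)$ for $n\ge1$, and let $\nu$ be the probability measure on the unit circle $\mathbb T$ whose Verblunsky coefficients are \[ \beta_{n-1}=\frac{1}{\tau_{n-1}}\,\frac{1-2M_n-ic_n}{1-ic_n},\qquad n\ge1 . \] Let $\varphi$ be the measure on $\mathbb R$ defined by $d\varphi(x)=-d\nu\big((x+i)/(x-i)\big)$, i.e. the image of $\nu$ under $\zeta\mapsto i(\zeta+1)/(\zeta-1)$, so that $\int_{\mathbb R}f\,d\varphi=\int_{\mathbb T\setminus\{1\}}f\big(i(\zeta+1)/(\zeta-1)\big)\,d\nu(\zeta)$. Then for every $n\ge0$, \[ \int_{-\infty}^{\infty}x^j\,\frac{P_n(x)}{(x^2+1)^n}\,d\varphi(x)=\gamma_n\,\delta_{n,j},\qquad j=0,1,\dots,n, \] where $\gamma_0=\int_{-\infty}^\infty d\varphi(x)=\int_{\mathbb T}d\nu(\zeta)=1$ and $\gamma_n=(1-M_n)\gamma_{n-1}$ for $n\ge1$.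
   Context: A sequence $\{d_{n+1}\}_{n\ge1}$ is a positive chain sequence if there is a parameter sequence $\{g_{n+1}\}_{n\ge0}$ with $0\le g_1<1$, $0<g_n<1$ for $n\ge2$, and $d_{n+1}=(1-g_n)g_{n+1}$ for $n\ge1$. The minimal parameter sequence $\{\ell_{n+1}\}_{n\ge0}$ is the one with $\ell_1=0$. The chain sequence has multiple parameter sequences if it has more than one parameter sequence; in that case the maximal parameter sequence $\{M_{n+1}\}_{n\ge0}$ is the parameter sequence with $g_n\le M_n$ for every parameter sequence $\{g_{n+1}\}$ and all $n$. For a nontrivial probability measure on $\mathbb T$ with monic orthogonal polynomials $\Phi_n$, the Verblunsky coefficients are $\alpha_n=-\overline{\Phi_{n+1}(0)}$, $n\ge0$. *)

theory Defs
  imports "HOL-Probability.Probability" "HOL-Computational_Algebra.Polynomial"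
begin

text \<open>A chain sequence is d :: nat => real, of which only d 2, d 3, ... matter
  (d (n+1) for n >= 1).  A parameter sequence is g :: nat => real, of which only
  g 1, g 2, ... matter (g (n+1) for n >= 0); the value g 0 is irrelevant.\<close>

definition is_param_seq :: "(nat \<Rightarrow> real) \<Rightarrow> (nat \<Rightarrow> real) \<Rightarrow> bool" where
  "is_param_seq d g \<longleftrightarrow>
     0 \<le> g 1 \<and> g 1 < 1 \<and> (\<forall>n\<ge>2. 0 < g n \<and> g n < 1) \<and>
     (\<forall>n\<ge>1. d (n + 1) = (1 - g n) * g (n + 1))"

definition positive_chain_seq :: "(nat \<Rightarrow> real) \<Rightarrow> bool" where
  "positive_chain_seq d \<longleftrightarrow> (\<forall>n\<ge>1. 0 < d (n + 1)) \<and> (\<exists>g. is_param_seq d g)"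

text \<open>Two parameter sequences are considered the same if they agree at all indices >= 1.\<close>
definition has_multiple_param_seqs :: "(nat \<Rightarrow> real) \<Rightarrow> bool" where
  "has_multiple_param_seqs d \<longleftrightarrow>
     (\<exists>g h. is_param_seq d g \<and> is_param_seq d h \<and> (\<exists>n\<ge>1. g n \<noteq> h n))"

definition is_max_param_seq :: "(nat \<Rightarrow> real) \<Rightarrow> (nat \<Rightarrow> real) \<Rightarrow> bool" where
  "is_max_param_seq d M \<longleftrightarrow>
     is_param_seq d M \<and> (\<forall>g. is_param_seq d g \<longrightarrow> (\<forall>n\<ge>1. g n \<le> M n))"

fun Pn :: "(nat \<Rightarrow> real) \<Rightarrow> (nat \<Rightarrow> real) \<Rightarrow> nat \<Rightarrow> real \<Rightarrow> real" where
  "Pn c d 0 x = 1"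
| "Pn c d (Suc 0) x = x - c 1"
| "Pn c d (Suc (Suc n)) x =
     (x - c (n + 2)) * Pn c d (Suc n) x - d (n + 2) * (x\<^sup>2 + 1) * Pn c d n x"

fun tau :: "(nat \<Rightarrow> real) \<Rightarrow> nat \<Rightarrow> complex" where
  "tau c 0 = 1"
| "tau c (Suc n) = tau c n * (1 - \<i> * of_real (c (Suc n))) / (1 + \<i> * of_real (c (Suc n)))"

fun gam :: "(nat \<Rightarrow> real) \<Rightarrow> nat \<Rightarrow> real" where
  "gam M 0 = 1"
| "gam M (Suc n) = (1 - M (Suc n)) * gam M n"

definition nontrivial_prob_on_circle :: "complex measure \<Rightarrow> bool" where
  "nontrivial_prob_on_circle \<nu> \<longleftrightarrow>
     sets \<nu> = sets borel \<and> prob_space \<nu> \<and> (AE z in \<nu>. cmod z = 1) \<and>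
     \<not> (\<exists>F. finite F \<and> (AE z in \<nu>. z \<in> F))"

definition is_monic_OP :: "complex measure \<Rightarrow> nat \<Rightarrow> complex poly \<Rightarrow> bool" where
  "is_monic_OP \<nu> n p \<longleftrightarrow>
     degree p = n \<and> lead_coeff p = 1 \<and>
     (\<forall>k<n. integral\<^sup>L \<nu> (\<lambda>z. poly p z * cnj (z ^ k)) = 0)"

definition monic_OP :: "complex measure \<Rightarrow> nat \<Rightarrow> complex poly" where
  "monic_OP \<nu> n = (THE p. is_monic_OP \<nu> n p)"

definition verblunsky :: "complex measure \<Rightarrow> nat \<Rightarrow> complex" where
  "verblunsky \<nu> n = - cnj (poly (monic_OP \<nu> (Suc n)) 0)"

text \<open>The measure phi on R: image of nu restricted to T minus {1} under
  zeta |-> i (zeta + 1)/(zeta - 1) (which is real on T minus {1}).\<close>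
definition cayley_push :: "complex measure \<Rightarrow> real measure" where
  "cayley_push \<nu> =
     distr (restrict_space \<nu> (- {1})) borel (\<lambda>\<zeta>. Re (\<i> * (\<zeta> + 1) / (\<zeta> - 1)))"

end

theory Submission
  imports Defs
begin

text \<open>Under the Cayley transform \<open>w = i (z + 1) / (z - 1)\<close>, the function
  \<open>(z - 1)\<^sup>n P\<^sub>n(w)\<close> becomes \<open>(2 i)\<^sup>n R\<^sub>n(z)\<close> for a polynomial \<open>R\<^sub>n\<close> of degree \<open>n\<close> obeying a
  three-term recurrence.  For the prescribed Verblunsky coefficients this recurrence is Szeg\<H>o's
  recursion in disguise: \<open>(z - 1) R\<^sub>n(z)\<close> is a multiple of the para-orthogonal polynomial
  \<open>z \<Phi>\<^sub>n(z) - \<tau>\<^sub>n \<Phi>\<^sub>n\<^sup>*(z)\<close>, which is orthogonal to \<open>z, \<dots>, z\<^sup>n\<close>.  Hence \<open>\<langle>R\<^sub>n, z\<^sup>k\<rangle>\<close> is the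
  same for all \<open>k \<le> n\<close>, and the recurrence identifies the common value as \<open>\<gamma>\<^sub>n\<close>.  The integrand
  \<open>x\<^sup>j P\<^sub>n(x) / (x\<^sup>2 + 1)\<^sup>n\<close> pulls back to a constant times \<open>R\<^sub>n(z)\<close> times the conjugate of
  \<open>(z + 1)\<^sup>j (z - 1)\<^sup>n\<^sup>-\<^sup>j\<close>, so the integral is \<open>\<gamma>\<^sub>n\<close> for \<open>j = n\<close> and \<open>0\<close> otherwise.

  This needs \<open>\<nu>{1} = 0\<close>.  Maximality of \<open>M\<close> forces
  \<open>\<Sum>\<^sub>k \<Prod>\<^sub>j\<^sub>\<le>\<^sub>k M\<^sub>j / (1 - M\<^sub>j) = \<infinity>\<close> (otherwise \<open>M\<close> could be increased, by Wall's
  criterion), and this sum equals \<open>\<Sum>\<^sub>k \<bar>\<Phi>\<^sub>k(1)\<bar>\<^sup>2 / \<parallel>\<Phi>\<^sub>k\<parallel>\<^sup>2\<close>, which is at most \<open>1 / \<nu>{1}\<close>.\<close>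

section \<open>The inner product of \<open>L\<^sup>2(\<nu>)\<close> for a measure on the circle\<close>

definition l2_inner :: "complex measure \<Rightarrow> (complex \<Rightarrow> complex) \<Rightarrow> (complex \<Rightarrow> complex) \<Rightarrow> complex" where
  "l2_inner \<nu> f g = (\<integral>z. f z * cnj (g z) \<partial>\<nu>)"

lemma cnj_eq_inverse_if_norm_1: "cmod z = 1 \<Longrightarrow> cnj z = inverse z"
  by (metis complex_norm_square inverse_unique mult.commute norm_one of_real_1 power_one)

lemma of_real_norm_power2: "complex_of_real (cmod z) ^ 2 = z * cnj z"
  by (metis complex_norm_square of_real_power)

lemma cnj_power_eq_power_diff_if_norm_1:
  assumes "cmod z = 1" "k \<le> n"
  shows "z ^ n * cnj (z ^ k) = z ^ (n - k)"
proof -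
  have "z ^ n = z ^ (n - k) * z ^ k" using assms(2) by (simp add: power_add[symmetric])
  moreover have "z \<noteq> 0" using assms(1) by auto
  ultimately show ?thesis by (simp add: cnj_eq_inverse_if_norm_1[OF assms(1)] power_inverse)
qed

lemma l2_inner_scale_left: "l2_inner \<nu> (\<lambda>z. a * f z) g = a * l2_inner \<nu> f g"
  unfolding l2_inner_def by (simp add: mult.assoc)

lemma l2_inner_cnj_swap: "l2_inner \<nu> f g = cnj (l2_inner \<nu> g f)"
  unfolding l2_inner_def Bochner_Integration.integral_cnj[symmetric] by (simp add: mult.commute)

lemma l2_inner_self: "l2_inner \<nu> f f = of_real (\<integral>z. cmod (f z) ^ 2 \<partial>\<nu>)"
  unfolding l2_inner_def complex_norm_square[symmetric] by (rule integral_complex_of_real)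

locale circle_measure = prob_space \<nu> for \<nu> :: "complex measure" +
  assumes sets_eq_borel: "sets \<nu> = sets borel"
    and AE_on_circle: "AE z in \<nu>. cmod z = 1"
    and not_AE_finite: "\<not> (\<exists>F. finite F \<and> (AE z in \<nu>. z \<in> F))"

lemma circle_measure_if_nontrivial: "nontrivial_prob_on_circle \<nu> \<Longrightarrow> circle_measure \<nu>"
  unfolding nontrivial_prob_on_circle_def circle_measure_def circle_measure_axioms_def by blast

context circle_measure
begin

lemma space_eq_UNIV: "space \<nu> = UNIV"
  using sets_eq_imp_space_eq[OF sets_eq_borel] by simp

lemma borel_measurable_continuous:
  fixes f :: "complex \<Rightarrow> 'b::topological_space"
  shows "continuous_on UNIV f \<Longrightarrow> f \<in> borel_measurable \<nu>"
  using borel_measurable_continuous_onI measurable_cong_sets[OF sets_eq_borel refl] by blast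

lemma integrable_continuous:
  fixes f :: "complex \<Rightarrow> 'b::{banach,second_countable_topology}"
  assumes "continuous_on UNIV f"
  shows "integrable \<nu> f"
proof -
  have "compact (f ` cball 0 1)"
    by (rule compact_continuous_image) (use assms continuous_on_subset in auto)
  then obtain B where B: "\<forall>y\<in>f ` cball 0 1. norm y \<le> B"
    using compact_imp_bounded bounded_iff by metis
  have "AE z in \<nu>. norm (f z) \<le> B"
    using AE_on_circle by eventually_elim (use B in auto)
  then show ?thesis
    using integrable_const_bound borel_measurable_continuous[OF assms] by blast
qed

lemma l2_inner_eq_integral_on_circle:
  assumes "continuous_on UNIV F" "continuous_on UNIV f" "continuous_on UNIV g"
    and "\<And>z. cmod z = 1 \<Longrightarrow> f z * cnj (g z) = F z"
  shows "l2_inner \<nu> f g = integral\<^sup>L \<nu> F"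
  unfolding l2_inner_def
  by (rule integral_cong_AE)
    (use assms AE_on_circle in \<open>auto intro!: borel_measurable_continuous continuous_intros elim: AE_mp\<close>)

lemma l2_inner_add_left:
  assumes "continuous_on UNIV f" "continuous_on UNIV g" "continuous_on UNIV h"
  shows "l2_inner \<nu> (\<lambda>z. f z + g z) h = l2_inner \<nu> f h + l2_inner \<nu> g h"
  unfolding l2_inner_def distrib_right
  by (rule Bochner_Integration.integral_add)
    (use assms in \<open>auto intro!: integrable_continuous continuous_intros\<close>)

lemma l2_inner_diff_left:
  assumes "continuous_on UNIV f" "continuous_on UNIV g" "continuous_on UNIV h"
  shows "l2_inner \<nu> (\<lambda>z. f z - g z) h = l2_inner \<nu> f h - l2_inner \<nu> g h"
  unfolding l2_inner_def left_diff_distrib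
  by (rule Bochner_Integration.integral_diff)
    (use assms in \<open>auto intro!: integrable_continuous continuous_intros\<close>)

lemma l2_inner_sum_right:
  assumes "finite A" "continuous_on UNIV f" "\<And>i. continuous_on UNIV (g i)"
  shows "l2_inner \<nu> f (\<lambda>z. \<Sum>i\<in>A. a i * g i z) = (\<Sum>i\<in>A. cnj (a i) * l2_inner \<nu> f (g i))"
proof -
  have "l2_inner \<nu> f (\<lambda>z. \<Sum>i\<in>A. a i * g i z) = (\<integral>z. (\<Sum>i\<in>A. cnj (a i) * (f z * cnj (g i z))) \<partial>\<nu>)"
    unfolding l2_inner_def by (simp add: sum_distrib_left mult_ac)
  also have "\<dots> = (\<Sum>i\<in>A. \<integral>z. cnj (a i) * (f z * cnj (g i z)) \<partial>\<nu>)"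
    by (rule Bochner_Integration.integral_sum)
      (use assms in \<open>auto intro!: integrable_continuous continuous_intros\<close>)
  finally show ?thesis unfolding l2_inner_def by simp
qed

lemma l2_inner_poly_right:
  assumes "continuous_on UNIV f"
  shows "l2_inner \<nu> f (poly r) = (\<Sum>i\<le>degree r. cnj (coeff r i) * l2_inner \<nu> f (\<lambda>z. z ^ i))"
proof -
  have "poly r = (\<lambda>z. \<Sum>i\<le>degree r. coeff r i * z ^ i)" by (rule ext) (simp add: poly_altdef)
  then show ?thesis
    using l2_inner_sum_right[OF _ assms, of "{..degree r}" "\<lambda>i z. z ^ i" "coeff r"]
    by (simp add: continuous_intros)
qed

lemma l2_inner_poly_right_eq_0:
  assumes "continuous_on UNIV f" "\<forall>k<n. l2_inner \<nu> f (\<lambda>z. z ^ k) = 0" "degree r < n"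
  shows "l2_inner \<nu> f (poly r) = 0"
  unfolding l2_inner_poly_right[OF assms(1)] using assms(2,3) by (auto intro!: sum.neutral)

lemma integral_norm_poly_pos:
  assumes "p \<noteq> 0"
  shows "(\<integral>z. cmod (poly p z) ^ 2 \<partial>\<nu>) > 0"
proof -
  have int: "integrable \<nu> (\<lambda>z. cmod (poly p z) ^ 2)"
    by (intro integrable_continuous continuous_intros)
  have "(\<integral>z. cmod (poly p z) ^ 2 \<partial>\<nu>) \<noteq> 0"
  proof
    assume "(\<integral>z. cmod (poly p z) ^ 2 \<partial>\<nu>) = 0"
    then have "AE z in \<nu>. cmod (poly p z) ^ 2 = 0"
      using integral_nonneg_eq_0_iff_AE[OF int] by auto
    then have "AE z in \<nu>. z \<in> {x. poly p x = 0}" by eventually_elim simp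
    then show False using not_AE_finite poly_roots_finite[OF assms] by blast
  qed
  moreover have "(\<integral>z. cmod (poly p z) ^ 2 \<partial>\<nu>) \<ge> 0" by (rule integral_nonneg_AE) auto
  ultimately show ?thesis by linarith
qed

lemma monic_orthogonal_unique:
  assumes "degree p = n" "coeff p n = 1" "degree q = n" "coeff q n = 1"
    and "\<forall>k<n. l2_inner \<nu> (poly p) (\<lambda>z. z ^ k) = 0" "\<forall>k<n. l2_inner \<nu> (poly q) (\<lambda>z. z ^ k) = 0"
  shows "p = q"
proof (rule ccontr)
  assume "p \<noteq> q"
  define r where "r = p - q"
  have "r \<noteq> 0" using \<open>p \<noteq> q\<close> by (simp add: r_def)
  have "degree r \<le> n" unfolding r_def using assms by (intro degree_diff_le) auto
  moreover have "coeff r n = 0" using assms by (simp add: r_def)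
  ultimately have deg: "degree r < n" using \<open>r \<noteq> 0\<close> leading_coeff_0_iff le_neq_implies_less by metis
  have "poly r = (\<lambda>z. poly p z - poly q z)" by (rule ext) (simp add: r_def)
  then have "l2_inner \<nu> (poly r) (poly r) = l2_inner \<nu> (poly p) (poly r) - l2_inner \<nu> (poly q) (poly r)"
    by (simp add: l2_inner_diff_left continuous_intros)
  also have "\<dots> = 0"
    using l2_inner_poly_right_eq_0[OF _ assms(5) deg] l2_inner_poly_right_eq_0[OF _ assms(6) deg]
    by (simp add: continuous_intros)
  finally show False using integral_norm_poly_pos[OF \<open>r \<noteq> 0\<close>] by (simp add: l2_inner_self)
qed

lemma l2_inner_times_z:
  assumes "continuous_on UNIV f"
  shows "l2_inner \<nu> (\<lambda>z. z * f z) (\<lambda>z. z ^ Suc m) = l2_inner \<nu> f (\<lambda>z. z ^ m)"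
  unfolding l2_inner_def[of _ f]
proof (rule l2_inner_eq_integral_on_circle)
  fix z :: complex assume z: "cmod z = 1"
  then have "z \<noteq> 0" by auto
  then show "z * f z * cnj (z ^ Suc m) = f z * cnj (z ^ m)"
    by (simp add: cnj_eq_inverse_if_norm_1[OF z] power_inverse field_simps)
qed (use assms in \<open>auto intro!: continuous_intros\<close>)

lemma l2_inner_reversed_monomial:
  assumes rev: "\<And>z. cmod z = 1 \<Longrightarrow> poly q z = z ^ n * cnj (poly p z)" and "k \<le> n"
  shows "l2_inner \<nu> (poly q) (\<lambda>z. z ^ k) = cnj (l2_inner \<nu> (poly p) (\<lambda>z. z ^ (n - k)))"
proof -
  have "l2_inner \<nu> (poly q) (\<lambda>z. z ^ k) = (\<integral>z. cnj (poly p z * cnj (z ^ (n - k))) \<partial>\<nu>)"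
    by (rule l2_inner_eq_integral_on_circle)
      (use rev cnj_power_eq_power_diff_if_norm_1[OF _ \<open>k \<le> n\<close>]
        in \<open>auto intro!: continuous_intros simp: mult_ac\<close>)
  also have "\<dots> = cnj (l2_inner \<nu> (poly p) (\<lambda>z. z ^ (n - k)))"
    unfolding l2_inner_def by (rule Bochner_Integration.integral_cnj)
  finally show ?thesis .
qed

lemma l2_inner_reversed_top:
  assumes rev: "\<And>z. cmod z = 1 \<Longrightarrow> poly q z = z ^ n * cnj (poly p z)"
  shows "l2_inner \<nu> (poly q) (\<lambda>z. z ^ Suc n) = cnj (l2_inner \<nu> (\<lambda>z. z * poly p z) (\<lambda>z. 1))"
proof -
  have "l2_inner \<nu> (poly q) (\<lambda>z. z ^ Suc n) = (\<integral>z. cnj (z * poly p z * cnj 1) \<partial>\<nu>)"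
  proof (rule l2_inner_eq_integral_on_circle)
    fix z :: complex assume z: "cmod z = 1"
    then have "z \<noteq> 0" by auto
    then show "poly q z * cnj (z ^ Suc n) = cnj (z * poly p z * cnj 1)"
      using rev[OF z] by (simp add: cnj_eq_inverse_if_norm_1[OF z] power_inverse field_simps)
  qed (auto intro!: continuous_intros)
  also have "\<dots> = cnj (l2_inner \<nu> (\<lambda>z. z * poly p z) (\<lambda>z. 1))"
    unfolding l2_inner_def by (rule Bochner_Integration.integral_cnj)
  finally show ?thesis .
qed

lemma l2_inner_monic_self:
  assumes "degree p = n" "coeff p n = 1" "\<forall>k<n. l2_inner \<nu> (poly p) (\<lambda>z. z ^ k) = 0"
  shows "l2_inner \<nu> (poly p) (poly p) = l2_inner \<nu> (poly p) (\<lambda>z. z ^ n)"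
proof -
  have "l2_inner \<nu> (poly p) (poly p) = (\<Sum>i\<le>n. cnj (coeff p i) * l2_inner \<nu> (poly p) (\<lambda>z. z ^ i))"
    using l2_inner_poly_right[of "poly p" p] assms(1) by (simp add: continuous_intros)
  also have "\<dots> = cnj (coeff p n) * l2_inner \<nu> (poly p) (\<lambda>z. z ^ n)"
    using assms(3) by (subst sum.remove[of _ n]) (auto intro!: sum.neutral)
  finally show ?thesis using assms(2) by simp
qed

lemma l2_inner_reversed_one:
  assumes "degree p = n" "coeff p n = 1" "\<forall>k<n. l2_inner \<nu> (poly p) (\<lambda>z. z ^ k) = 0"
    and rev: "\<And>z. cmod z = 1 \<Longrightarrow> poly q z = z ^ n * cnj (poly p z)"
  shows "l2_inner \<nu> (poly q) (\<lambda>z. 1) = of_real (\<integral>z. cmod (poly p z) ^ 2 \<partial>\<nu>)"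
  using l2_inner_reversed_monomial[OF rev, of 0] l2_inner_monic_self[OF assms(1-3)]
  by (simp add: l2_inner_self) (metis complex_cnj_complex_of_real)

lemma szego_step_orthogonal:
  assumes "degree p = n" "coeff p n = 1" and orth: "\<forall>k<n. l2_inner \<nu> (poly p) (\<lambda>z. z ^ k) = 0"
    and rev: "\<And>z. cmod z = 1 \<Longrightarrow> poly q z = z ^ n * cnj (poly p z)"
    and a: "a = l2_inner \<nu> (\<lambda>z. z * poly p z) (\<lambda>z. 1) / l2_inner \<nu> (poly q) (\<lambda>z. 1)"
    and "k < Suc n"
  shows "l2_inner \<nu> (\<lambda>z. z * poly p z - a * poly q z) (\<lambda>z. z ^ k) = 0"
proof -
  have split: "l2_inner \<nu> (\<lambda>z. z * poly p z - a * poly q z) (\<lambda>z. z ^ k) =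
      l2_inner \<nu> (\<lambda>z. z * poly p z) (\<lambda>z. z ^ k) - a * l2_inner \<nu> (poly q) (\<lambda>z. z ^ k)"
    unfolding l2_inner_scale_left[symmetric] by (rule l2_inner_diff_left) (intro continuous_intros)+
  show ?thesis
  proof (cases k)
    case 0
    have "p \<noteq> 0" using assms(2) by auto
    then have "l2_inner \<nu> (poly q) (\<lambda>z. 1) \<noteq> 0"
      using l2_inner_reversed_one[OF assms(1,2) orth rev] integral_norm_poly_pos[of p] by simp
    then show ?thesis using split by (simp add: a 0)
  next
    case (Suc m)
    then have "l2_inner \<nu> (\<lambda>z. z * poly p z) (\<lambda>z. z ^ k) = 0"
      using l2_inner_times_z[of "poly p" m] orth \<open>k < Suc n\<close> by (simp add: continuous_intros)
    moreover have "l2_inner \<nu> (poly q) (\<lambda>z. z ^ k) = 0"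
      using l2_inner_reversed_monomial[OF rev, of k] orth Suc \<open>k < Suc n\<close> by simp
    ultimately show ?thesis unfolding split by simp
  qed
qed

end

section \<open>Szeg\<H>o's recursion\<close>

text \<open>The second component is the reversed polynomial \<open>\<Phi>\<^sub>n\<^sup>*\<close>, and the coefficient is chosen so that \<open>\<Phi>\<^sub>n\<^sub>+\<^sub>1 \<bottom> 1\<close>.\<close>
fun szego :: "complex measure \<Rightarrow> nat \<Rightarrow> complex poly \<times> complex poly" where
  "szego \<nu> 0 = (1, 1)"
| "szego \<nu> (Suc n) = (case szego \<nu> n of (p, q) \<Rightarrow>
     let a = l2_inner \<nu> (\<lambda>z. z * poly p z) (\<lambda>z. 1) / l2_inner \<nu> (poly q) (\<lambda>z. 1)
     in (pCons 0 p - smult a q, q - smult (cnj a) (pCons 0 p)))"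

definition szego_Phi :: "complex measure \<Rightarrow> nat \<Rightarrow> complex poly" where
  "szego_Phi \<nu> n = fst (szego \<nu> n)"

definition szego_Phi_rev :: "complex measure \<Rightarrow> nat \<Rightarrow> complex poly" where
  "szego_Phi_rev \<nu> n = snd (szego \<nu> n)"

definition szego_coeff :: "complex measure \<Rightarrow> nat \<Rightarrow> complex" where
  "szego_coeff \<nu> n = l2_inner \<nu> (\<lambda>z. z * poly (szego_Phi \<nu> n) z) (\<lambda>z. 1)
     / l2_inner \<nu> (poly (szego_Phi_rev \<nu> n)) (\<lambda>z. 1)"

lemma szego_Phi_0 [simp]: "szego_Phi \<nu> 0 = 1"
  and szego_Phi_rev_0 [simp]: "szego_Phi_rev \<nu> 0 = 1"
  by (simp_all add: szego_Phi_def szego_Phi_rev_def)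

lemma szego_Phi_Suc:
  "szego_Phi \<nu> (Suc n) = pCons 0 (szego_Phi \<nu> n) - smult (szego_coeff \<nu> n) (szego_Phi_rev \<nu> n)"
  and szego_Phi_rev_Suc:
  "szego_Phi_rev \<nu> (Suc n) = szego_Phi_rev \<nu> n - smult (cnj (szego_coeff \<nu> n)) (pCons 0 (szego_Phi \<nu> n))"
  by (cases "szego \<nu> n"; simp add: szego_Phi_def szego_Phi_rev_def szego_coeff_def Let_def)+

lemma poly_szego_Phi_Suc:
  "poly (szego_Phi \<nu> (Suc n)) z = z * poly (szego_Phi \<nu> n) z - szego_coeff \<nu> n * poly (szego_Phi_rev \<nu> n) z"
  and poly_szego_Phi_rev_Suc:
  "poly (szego_Phi_rev \<nu> (Suc n)) z = poly (szego_Phi_rev \<nu> n) z - cnj (szego_coeff \<nu> n) * (z * poly (szego_Phi \<nu> n) z)"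
  by (simp_all add: szego_Phi_Suc szego_Phi_rev_Suc)

context circle_measure
begin

lemma szego_invariants:
  "degree (szego_Phi \<nu> n) = n \<and> coeff (szego_Phi \<nu> n) n = 1 \<and>
   degree (szego_Phi_rev \<nu> n) \<le> n \<and> coeff (szego_Phi_rev \<nu> n) 0 = 1 \<and>
   (\<forall>z. cmod z = 1 \<longrightarrow> poly (szego_Phi_rev \<nu> n) z = z ^ n * cnj (poly (szego_Phi \<nu> n) z)) \<and>
   (\<forall>k<n. l2_inner \<nu> (poly (szego_Phi \<nu> n)) (\<lambda>z. z ^ k) = 0)"
proof (induction n)
  case 0
  show ?case by simp
next
  case (Suc n)
  define p q a where "p = szego_Phi \<nu> n" and "q = szego_Phi_rev \<nu> n" and "a = szego_coeff \<nu> n"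
  have dp: "degree p = n" and cp: "coeff p n = 1" and dq: "degree q \<le> n" and cq: "coeff q 0 = 1"
    and rev: "\<And>z. cmod z = 1 \<Longrightarrow> poly q z = z ^ n * cnj (poly p z)"
    and orth: "\<forall>k<n. l2_inner \<nu> (poly p) (\<lambda>z. z ^ k) = 0"
    using Suc.IH by (simp_all add: p_def q_def)
  have Phi: "szego_Phi \<nu> (Suc n) = pCons 0 p - smult a q"
    and Phi_rev: "szego_Phi_rev \<nu> (Suc n) = q - smult (cnj a) (pCons 0 p)"
    by (simp_all add: szego_Phi_Suc szego_Phi_rev_Suc p_def q_def a_def)
  have "p \<noteq> 0" using cp by auto
  then have dpz: "degree (pCons 0 p) = Suc n" using dp by simp
  have "degree (- smult a q) < Suc n" using dq degree_smult_le[of a q] by simp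
  then have "degree (szego_Phi \<nu> (Suc n)) = Suc n"
    unfolding Phi diff_conv_add_uminus using degree_add_eq_left[of "- smult a q" "pCons 0 p"] dpz by simp
  moreover have "coeff (szego_Phi \<nu> (Suc n)) (Suc n) = 1"
    unfolding Phi using cp coeff_eq_0[of q "Suc n"] dq by simp
  moreover have "degree (szego_Phi_rev \<nu> (Suc n)) \<le> Suc n"
    unfolding Phi_rev using dq dpz degree_smult_le[of "cnj a" "pCons 0 p"] by (intro degree_diff_le) auto
  moreover have "coeff (szego_Phi_rev \<nu> (Suc n)) 0 = 1" unfolding Phi_rev using cq by simp
  moreover have "poly (szego_Phi_rev \<nu> (Suc n)) z = z ^ Suc n * cnj (poly (szego_Phi \<nu> (Suc n)) z)"
    if z: "cmod z = 1" for z
  proof -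
    have "z \<noteq> 0" using z by auto
    then show ?thesis
      unfolding Phi Phi_rev using rev[OF z] by (simp add: cnj_eq_inverse_if_norm_1[OF z] power_inverse field_simps)
  qed
  moreover have "l2_inner \<nu> (poly (szego_Phi \<nu> (Suc n))) (\<lambda>z. z ^ k) = 0" if "k < Suc n" for k
  proof -
    have "poly (szego_Phi \<nu> (Suc n)) = (\<lambda>z. z * poly p z - a * poly q z)"
      unfolding Phi by (rule ext) simp
    then show ?thesis
      using szego_step_orthogonal[OF dp cp orth rev _ that] by (simp add: a_def szego_coeff_def p_def q_def)
  qed
  ultimately show ?case by blast
qed

lemma degree_szego_Phi: "degree (szego_Phi \<nu> n) = n"
  and coeff_szego_Phi: "coeff (szego_Phi \<nu> n) n = 1"
  and coeff_szego_Phi_rev_0: "coeff (szego_Phi_rev \<nu> n) 0 = 1"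
  and poly_szego_Phi_rev_on_circle:
    "cmod z = 1 \<Longrightarrow> poly (szego_Phi_rev \<nu> n) z = z ^ n * cnj (poly (szego_Phi \<nu> n) z)"
  and szego_Phi_orth_monomials: "k < n \<Longrightarrow> l2_inner \<nu> (poly (szego_Phi \<nu> n)) (\<lambda>z. z ^ k) = 0"
  using szego_invariants by blast+

lemma szego_Phi_nonzero: "szego_Phi \<nu> n \<noteq> 0"
  using coeff_szego_Phi[of n] by auto

lemma monic_OP_eq_szego_Phi: "monic_OP \<nu> n = szego_Phi \<nu> n"
  unfolding monic_OP_def
proof (rule the_equality)
  show "is_monic_OP \<nu> n (szego_Phi \<nu> n)"
    using degree_szego_Phi coeff_szego_Phi szego_Phi_orth_monomials by (simp add: is_monic_OP_def l2_inner_def)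
next
  fix p assume "is_monic_OP \<nu> n p"
  then show "p = szego_Phi \<nu> n"
    using degree_szego_Phi coeff_szego_Phi szego_Phi_orth_monomials
    by (intro monic_orthogonal_unique[of p n "szego_Phi \<nu> n"]) (auto simp: is_monic_OP_def l2_inner_def)
qed

lemma verblunsky_eq_cnj_szego_coeff: "verblunsky \<nu> n = cnj (szego_coeff \<nu> n)"
  unfolding verblunsky_def monic_OP_eq_szego_Phi szego_Phi_Suc
  using coeff_szego_Phi_rev_0[of n] by (simp add: poly_0_coeff_0)

definition Phi_norm2 :: "nat \<Rightarrow> real" where
  "Phi_norm2 n = (\<integral>z. cmod (poly (szego_Phi \<nu> n) z) ^ 2 \<partial>\<nu>)"

lemma Phi_norm2_pos: "Phi_norm2 n > 0"
  unfolding Phi_norm2_def by (rule integral_norm_poly_pos[OF szego_Phi_nonzero])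

lemma Phi_norm2_0: "Phi_norm2 0 = 1"
  by (simp add: Phi_norm2_def prob_space)

lemma l2_inner_szego_Phi_self: "l2_inner \<nu> (poly (szego_Phi \<nu> n)) (poly (szego_Phi \<nu> n)) = of_real (Phi_norm2 n)"
  unfolding Phi_norm2_def by (rule l2_inner_self)

lemma l2_inner_szego_Phi_rev_one: "l2_inner \<nu> (poly (szego_Phi_rev \<nu> n)) (\<lambda>z. 1) = of_real (Phi_norm2 n)"
  unfolding Phi_norm2_def
  by (rule l2_inner_reversed_one)
    (use degree_szego_Phi coeff_szego_Phi szego_Phi_orth_monomials poly_szego_Phi_rev_on_circle in auto)

lemma l2_inner_szego_Phi_top: "l2_inner \<nu> (poly (szego_Phi \<nu> n)) (\<lambda>z. z ^ n) = of_real (Phi_norm2 n)"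
  using l2_inner_monic_self[OF degree_szego_Phi coeff_szego_Phi] szego_Phi_orth_monomials
    l2_inner_szego_Phi_self by simp

lemma Phi_norm2_Suc: "Phi_norm2 (Suc n) = (1 - cmod (szego_coeff \<nu> n) ^ 2) * Phi_norm2 n"
proof -
  define p q a where "p = szego_Phi \<nu> n" and "q = szego_Phi_rev \<nu> n" and "a = szego_coeff \<nu> n"
  have moment: "l2_inner \<nu> (\<lambda>z. z * poly p z) (\<lambda>z. 1) = a * of_real (Phi_norm2 n)"
    using l2_inner_szego_Phi_rev_one[of n] Phi_norm2_pos[of n]
    by (simp add: a_def p_def szego_coeff_def)
  have "poly (szego_Phi \<nu> (Suc n)) = (\<lambda>z. z * poly p z - a * poly q z)"
    by (rule ext) (simp add: poly_szego_Phi_Suc p_def q_def a_def)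
  then have "of_real (Phi_norm2 (Suc n)) =
      l2_inner \<nu> (\<lambda>z. z * poly p z) (\<lambda>z. z ^ Suc n) - a * l2_inner \<nu> (poly q) (\<lambda>z. z ^ Suc n)"
    unfolding l2_inner_szego_Phi_top[symmetric] l2_inner_scale_left[symmetric]
    by (simp add: l2_inner_diff_left continuous_intros)
  also have "\<dots> = of_real (Phi_norm2 n) - a * cnj (a * of_real (Phi_norm2 n))"
    using l2_inner_times_z[of "poly p" n] l2_inner_szego_Phi_top[of n]
      l2_inner_reversed_top[OF poly_szego_Phi_rev_on_circle, of n] moment
    by (simp add: continuous_intros p_def q_def)
  also have "\<dots> = of_real ((1 - cmod a ^ 2) * Phi_norm2 n)"
    by (simp add: of_real_norm_power2 algebra_simps)
  finally show ?thesis unfolding a_def of_real_eq_iff .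
qed

lemma l2_inner_szego_Phi_orth:
  assumes "k \<noteq> m"
  shows "l2_inner \<nu> (poly (szego_Phi \<nu> k)) (poly (szego_Phi \<nu> m)) = 0"
proof -
  have "l2_inner \<nu> (poly (szego_Phi \<nu> k)) (poly (szego_Phi \<nu> m)) = 0" if "m < k" for k m
    using l2_inner_poly_right_eq_0[of "poly (szego_Phi \<nu> k)" k "szego_Phi \<nu> m"] that
      szego_Phi_orth_monomials degree_szego_Phi by (simp add: continuous_intros)
  from this[of k m] this[of m k] assms show ?thesis
    by (cases "m < k") (auto simp: l2_inner_cnj_swap[of _ "poly (szego_Phi \<nu> k)"])
qed

lemma integral_norm_szego_Phi_sum:
  "(\<integral>z. cmod (\<Sum>k\<le>n. w k * poly (szego_Phi \<nu> k) z) ^ 2 \<partial>\<nu>) = (\<Sum>k\<le>n. cmod (w k) ^ 2 * Phi_norm2 k)"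
proof -
  define p where "p z = (\<Sum>k\<le>n. w k * poly (szego_Phi \<nu> k) z)" for z
  have coefficient: "l2_inner \<nu> p (poly (szego_Phi \<nu> m)) = w m * of_real (Phi_norm2 m)" if "m \<le> n" for m
  proof -
    have "l2_inner \<nu> (poly (szego_Phi \<nu> m)) p
        = (\<Sum>k\<le>n. cnj (w k) * l2_inner \<nu> (poly (szego_Phi \<nu> m)) (poly (szego_Phi \<nu> k)))"
      unfolding p_def by (rule l2_inner_sum_right) (auto intro!: continuous_intros)
    also have "\<dots> = (\<Sum>k\<le>n. if k = m then cnj (w m) * of_real (Phi_norm2 m) else 0)"
      by (rule sum.cong) (auto simp: l2_inner_szego_Phi_orth l2_inner_szego_Phi_self)
    also have "\<dots> = cnj (w m) * of_real (Phi_norm2 m)" using that by simp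
    finally show ?thesis by (subst l2_inner_cnj_swap) simp
  qed
  have "of_real (\<integral>z. cmod (p z) ^ 2 \<partial>\<nu>) = l2_inner \<nu> p (\<lambda>z. \<Sum>k\<le>n. w k * poly (szego_Phi \<nu> k) z)"
    unfolding l2_inner_self[symmetric] p_def ..
  also have "\<dots> = (\<Sum>m\<le>n. cnj (w m) * l2_inner \<nu> p (poly (szego_Phi \<nu> m)))"
    unfolding p_def by (rule l2_inner_sum_right) (auto intro!: continuous_intros)
  also have "\<dots> = of_real (\<Sum>k\<le>n. cmod (w k) ^ 2 * Phi_norm2 k)"
    unfolding of_real_sum using coefficient by (intro sum.cong) (auto simp: of_real_norm_power2 mult_ac)
  finally show ?thesis unfolding p_def of_real_eq_iff .
qed

text \<open>The reproducing-kernel estimate: the polynomial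
  \<open>p = \<Sum>\<^sub>k \<Phi>\<^sub>k(\<zeta>)\<^sup>* \<Phi>\<^sub>k / \<parallel>\<Phi>\<^sub>k\<parallel>\<^sup>2\<close> has \<open>p(\<zeta>) = \<parallel>p\<parallel>\<^sup>2 = K\<close>, and
  \<open>\<nu>{\<zeta>} \<bar>p(\<zeta>)\<bar>\<^sup>2 \<le> \<parallel>p\<parallel>\<^sup>2\<close>.\<close>
lemma measure_singleton_kernel_bound:
  fixes n :: nat and \<zeta> :: complex
  defines "K \<equiv> \<Sum>k\<le>n. cmod (poly (szego_Phi \<nu> k) \<zeta>) ^ 2 / Phi_norm2 k"
  shows "measure \<nu> {\<zeta>} * K ^ 2 \<le> K"
proof -
  define w where "w k = cnj (poly (szego_Phi \<nu> k) \<zeta>) / of_real (Phi_norm2 k)" for k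
  define p where "p z = (\<Sum>k\<le>n. w k * poly (szego_Phi \<nu> k) z)" for z
  have w_norm: "cmod (w k) ^ 2 * Phi_norm2 k = cmod (poly (szego_Phi \<nu> k) \<zeta>) ^ 2 / Phi_norm2 k" for k
    using Phi_norm2_pos[of k] by (simp add: w_def norm_divide power_divide power2_eq_square)
  have norm_p: "(\<integral>z. cmod (p z) ^ 2 \<partial>\<nu>) = K"
    unfolding p_def integral_norm_szego_Phi_sum K_def w_norm ..
  have "p \<zeta> = of_real K"
    unfolding p_def K_def of_real_sum
    by (rule sum.cong) (use Phi_norm2_pos in \<open>simp_all add: w_def of_real_norm_power2 mult.commute\<close>)
  moreover have "K \<ge> 0" unfolding K_def by (simp add: sum_nonneg Phi_norm2_pos less_imp_le)
  ultimately have "cmod (p \<zeta>) = K" by (metis abs_of_nonneg norm_of_real)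
  then have "measure \<nu> {\<zeta>} * K ^ 2 = (\<integral>z. indicator {\<zeta>} z * cmod (p \<zeta>) ^ 2 \<partial>\<nu>)"
    using space_eq_UNIV by simp
  also have "\<dots> \<le> (\<integral>z. cmod (p z) ^ 2 \<partial>\<nu>)"
  proof (rule integral_mono)
    show "integrable \<nu> (\<lambda>z. indicator {\<zeta>} z * cmod (p \<zeta>) ^ 2)"
      using sets_eq_borel by (intro integrable_mult_left) (auto simp: emeasure_eq_measure)
    show "integrable \<nu> (\<lambda>z. cmod (p z) ^ 2)" unfolding p_def by (intro integrable_continuous continuous_intros)
  qed (auto simp: indicator_def)
  finally show ?thesis using norm_p by simp
qed

end

section \<open>The Cayley transform\<close>

lemma one_plus_i_of_real_nonzero: "1 + \<i> * complex_of_real x \<noteq> 0"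
  and one_minus_i_of_real_nonzero: "1 - \<i> * complex_of_real x \<noteq> 0"
  by (simp_all add: complex_eq_iff)

lemma norm_tau: "cmod (tau c n) = 1"
proof (induction n)
  case (Suc n)
  have "cmod (1 - \<i> * complex_of_real (c (Suc n))) = cmod (1 + \<i> * complex_of_real (c (Suc n)))"
    by (metis complex_mod_cnj complex_cnj_add complex_cnj_complex_of_real complex_cnj_i complex_cnj_one
        mult_minus_left complex_cnj_mult diff_conv_add_uminus)
  with Suc.IH one_plus_i_of_real_nonzero show ?case by (simp add: norm_mult norm_divide)
qed simp

lemma tau_nonzero: "tau c n \<noteq> 0"
  using norm_tau[of c n] by auto

text \<open>\<open>cayley_Pn c d n z = (z - 1)\<^sup>n P\<^sub>n(w) / (2 i)\<^sup>n\<close> for \<open>w = i (z + 1) / (z - 1)\<close>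
  (lemma \<open>Pn_cayley\<close>); this is the polynomial \<open>P\<^sub>n\<close> pulled back to the circle.\<close>
fun cayley_Pn :: "(nat \<Rightarrow> real) \<Rightarrow> (nat \<Rightarrow> real) \<Rightarrow> nat \<Rightarrow> complex \<Rightarrow> complex" where
  "cayley_Pn c d 0 z = 1"
| "cayley_Pn c d (Suc 0) z = ((1 + \<i> * of_real (c 1)) * z + (1 - \<i> * of_real (c 1))) / 2"
| "cayley_Pn c d (Suc (Suc n)) z =
     ((1 + \<i> * of_real (c (n + 2))) * z + (1 - \<i> * of_real (c (n + 2)))) / 2 * cayley_Pn c d (Suc n) z
     - of_real (d (n + 2)) * z * cayley_Pn c d n z"

lemma continuous_on_cayley_Pn: "continuous_on UNIV (cayley_Pn c d n)"
  by (induction c d n "0::complex" rule: cayley_Pn.induct)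
    (auto intro!: continuous_intros simp del: cayley_Pn.simps simp: cayley_Pn.simps(1,2,3)[abs_def])

lemma continuous_on_Pn: "continuous_on UNIV (Pn c d n)"
  by (induction c d n "0::real" rule: Pn.induct)
    (auto intro!: continuous_intros simp del: Pn.simps simp: Pn.simps(1,2,3)[abs_def])

lemma cayley_mult_eq:
  assumes "z \<noteq> 1" "w = \<i> * (z + 1) / (z - 1)"
  shows "w * (z - 1) = \<i> * (z + 1)"
  using assms by simp

lemma cayley_square_plus_one:
  assumes "z \<noteq> 1" "w = \<i> * (z + 1) / (z - 1)"
  shows "(w\<^sup>2 + 1) * (z - 1) ^ 2 = (2 * \<i>) ^ 2 * z"
proof -
  have "(w\<^sup>2 + 1) * (z - 1) ^ 2 = (w * (z - 1)) ^ 2 + (z - 1) ^ 2"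
    by (simp add: power_mult_distrib distrib_right)
  then show ?thesis
    unfolding cayley_mult_eq[OF assms] by (simp add: power2_eq_square algebra_simps)
qed

lemma Pn_cayley:
  assumes "z \<noteq> 1" "complex_of_real x = \<i> * (z + 1) / (z - 1)"
  shows "of_real (Pn c d n x) * (z - 1) ^ n = (2 * \<i>) ^ n * cayley_Pn c d n z"
  using assms
proof (induction c d n x rule: Pn.induct)
  case (1 c d x)
  then show ?case by simp
next
  case (2 c d x)
  then show ?case using cayley_mult_eq[OF 2] by (simp add: field_simps)
next
  case (3 c d n x)
  let ?w = "complex_of_real x" and ?c = "complex_of_real (c (n + 2))"
  have lin: "(?w - ?c) * (z - 1) = 2 * \<i> * (((1 + \<i> * ?c) * z + (1 - \<i> * ?c)) / 2)"
    using cayley_mult_eq[OF 3(3,4)] by (simp add: algebra_simps)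
  have "of_real (Pn c d (Suc (Suc n)) x) * (z - 1) ^ Suc (Suc n) =
      ((?w - ?c) * (z - 1)) * (of_real (Pn c d (Suc n) x) * (z - 1) ^ Suc n)
      - of_real (d (n + 2)) * ((?w\<^sup>2 + 1) * (z - 1) ^ 2) * (of_real (Pn c d n x) * (z - 1) ^ n)"
    by (simp add: algebra_simps power2_eq_square)
  also have "\<dots> = (2 * \<i>) ^ Suc (Suc n) * cayley_Pn c d (Suc (Suc n)) z"
    unfolding lin cayley_square_plus_one[OF 3(3,4)] 3(1,2)[OF 3(3,4)]
    by (simp add: algebra_simps power2_eq_square)
  finally show ?case .
qed

lemma cayley_real:
  assumes "cmod z = 1" "z \<noteq> 1"
  shows "complex_of_real (Re (\<i> * (z + 1) / (z - 1))) = \<i> * (z + 1) / (z - 1)"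
proof -
  have "z \<noteq> 0" "z - 1 \<noteq> 0" "1 - z \<noteq> 0" using assms by auto
  then have "cnj (\<i> * (z + 1) / (z - 1)) = \<i> * (z + 1) / (z - 1)"
    by (simp add: cnj_eq_inverse_if_norm_1[OF assms(1)] field_simps)
  then show ?thesis using Reals_cnj_iff of_real_Re by blast
qed

lemma cnj_binomials_on_circle:
  assumes "cmod z = 1"
  shows "cnj ((z + 1) ^ j * (z - 1) ^ e) * z ^ (j + e) = (z + 1) ^ j * (1 - z) ^ e"
proof -
  have "z \<noteq> 0" using assms by auto
  then have "cnj (z + 1) * z = z + 1" "cnj (z - 1) * z = 1 - z"
    by (simp_all add: cnj_eq_inverse_if_norm_1[OF assms] field_simps)
  then show ?thesis
    by (simp add: power_add power_mult_distrib[symmetric] mult_ac)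
qed

lemma Pn_integrand_cayley:
  assumes z: "cmod z = 1" "z \<noteq> 1" and "j \<le> n"
  defines "x \<equiv> Re (\<i> * (z + 1) / (z - 1))"
  shows "complex_of_real (x ^ j * Pn c d n x / (x\<^sup>2 + 1) ^ n)
    = \<i> ^ j * (-1) ^ (n - j) / (2 * \<i>) ^ n * (cayley_Pn c d n z * cnj ((z + 1) ^ j * (z - 1) ^ (n - j)))"
    (is "?lhs = ?rhs")
proof -
  define w e where "w = complex_of_real x" and "e = n - j"
  have n: "n = j + e" using \<open>j \<le> n\<close> by (simp add: e_def)
  have w: "w = \<i> * (z + 1) / (z - 1)" unfolding w_def x_def by (rule cayley_real[OF z])
  have "z \<noteq> 0" using z by auto
  have sq: "(w\<^sup>2 + 1) * (z - 1) ^ 2 = (2 * \<i>) ^ 2 * z" by (rule cayley_square_plus_one[OF z(2) w])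
  with \<open>z \<noteq> 0\<close> have "w\<^sup>2 + 1 \<noteq> 0" by auto
  have scale: "((2 * \<i>) ^ 2 * z) ^ n \<noteq> 0" using \<open>z \<noteq> 0\<close> by simp
  have lhs: "?lhs = w ^ j * of_real (Pn c d n x) / (w\<^sup>2 + 1) ^ n" by (simp add: w_def)
  have "?lhs * ((2 * \<i>) ^ 2 * z) ^ n = w ^ j * of_real (Pn c d n x) * ((z - 1) ^ 2) ^ n"
    unfolding lhs sq[symmetric] using \<open>w\<^sup>2 + 1 \<noteq> 0\<close> by (simp add: power_mult_distrib)
  also have "\<dots> = (w * (z - 1)) ^ j * (of_real (Pn c d n x) * (z - 1) ^ n) * (z - 1) ^ e"
    by (simp add: n power_add power_mult_distrib power_mult[symmetric] mult_2_right mult_ac)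
  also have "\<dots> = (\<i> * (z + 1)) ^ j * ((2 * \<i>) ^ n * cayley_Pn c d n z) * (z - 1) ^ e"
    unfolding cayley_mult_eq[OF z(2) w] Pn_cayley[OF z(2) cayley_real[OF z, folded x_def]] ..
  also have "\<dots> = ?rhs * ((2 * \<i>) ^ 2 * z) ^ n"
  proof -
    have "((2 * \<i>) ^ 2 * z) ^ n = (2 * \<i>) ^ n * (2 * \<i>) ^ n * z ^ (j + e)"
      by (simp only: n power2_eq_square power_mult_distrib)
    moreover have "(-1) ^ e * (1 - z) ^ e = (z - 1) ^ e" by (simp add: power_mult_distrib[symmetric])
    ultimately show ?thesis
      using cnj_binomials_on_circle[OF z(1), of j e]
      by (simp add: e_def[symmetric] power_mult_distrib mult_ac)
  qed
  finally show ?thesis using scale mult_right_cancel by blast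
qed

lemma (in circle_measure) integral_cayley_push:
  fixes f :: "real \<Rightarrow> real" and h :: "complex \<Rightarrow> complex"
  assumes f: "continuous_on UNIV f" and h: "continuous_on UNIV h" and "AE z in \<nu>. z \<noteq> 1"
    and f_h: "\<And>z. cmod z = 1 \<Longrightarrow> z \<noteq> 1 \<Longrightarrow> complex_of_real (f (Re (\<i> * (z + 1) / (z - 1)))) = h z"
  shows "integrable (cayley_push \<nu>) f" "integral\<^sup>L (cayley_push \<nu>) f = Re (integral\<^sup>L \<nu> h)"
proof -
  define cay where "cay z = Re (\<i> * (z + 1) / (z - 1))" for z
  define g where "g z = indicator (- {1}) z *\<^sub>R f (cay z)" for z
  have f_meas: "f \<in> borel_measurable borel" by (rule borel_measurable_continuous_onI[OF f])
  have "cay \<in> borel_measurable borel" unfolding cay_def by measurable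
  then have cay_meas: "cay \<in> borel_measurable \<nu>" using measurable_cong_sets[OF sets_eq_borel refl] by blast
  then have cay_meas': "cay \<in> borel_measurable (restrict_space \<nu> (- {1}))"
    by (rule measurable_restrict_space1)
  have compl: "- {1} \<inter> space \<nu> \<in> sets \<nu>" "- {1} \<in> sets \<nu>" unfolding space_eq_UNIV sets_eq_borel by simp_all
  have g_meas: "g \<in> borel_measurable \<nu>"
    unfolding g_def using compl
    by (intro borel_measurable_scaleR borel_measurable_indicator measurable_compose[OF cay_meas f_meas])
  have AE_g: "AE z in \<nu>. g z = Re (h z)"
    using AE_on_circle \<open>AE z in \<nu>. z \<noteq> 1\<close>
  proof eventually_elim
    case (elim z)
    then have "f (cay z) = Re (h z)" using f_h[of z] unfolding cay_def by (metis Re_complex_of_real)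
    then show ?case using elim by (simp add: g_def)
  qed
  have int_h: "integrable \<nu> h" by (rule integrable_continuous[OF h])
  have int_g: "integrable \<nu> g"
    by (rule integrable_cong_AE_imp[OF integrable_Re[OF int_h] g_meas]) (use AE_g in \<open>auto elim: AE_mp\<close>)
  show "integrable (cayley_push \<nu>) f"
    unfolding cayley_push_def cay_def[symmetric, abs_def] integrable_distr_eq[OF cay_meas' f_meas]
      integrable_restrict_space[OF compl(1)] using int_g by (simp only: g_def[abs_def])
  have "integral\<^sup>L (cayley_push \<nu>) f = integral\<^sup>L (restrict_space \<nu> (- {1})) (\<lambda>z. f (cay z))"
    unfolding cayley_push_def cay_def[symmetric, abs_def] by (rule integral_distr[OF cay_meas' f_meas])
  also have "\<dots> = integral\<^sup>L \<nu> g"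
    unfolding g_def by (rule integral_restrict_space[OF compl(1)])
  also have "\<dots> = integral\<^sup>L \<nu> (\<lambda>z. Re (h z))"
    by (rule integral_cong_AE[OF g_meas _ AE_g]) (intro borel_measurable_continuous continuous_intros h)
  also have "\<dots> = Re (integral\<^sup>L \<nu> h)" by (rule integral_Re[OF int_h])
  finally show "integral\<^sup>L (cayley_push \<nu>) f = Re (integral\<^sup>L \<nu> h)" .
qed

section \<open>Chain sequences and Wall's criterion\<close>

lemma param_seq_eq_if_first_eq:
  assumes g: "is_param_seq d g" and h: "is_param_seq d h" and "g 1 = h 1" and "n \<ge> 1"
  shows "g n = h n"
  using \<open>n \<ge> 1\<close>
proof (induction n rule: nat_induct_at_least)
  case base
  then show ?case using \<open>g 1 = h 1\<close> by simp
next
  case (Suc n)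
  have "d (n + 1) = (1 - g n) * g (n + 1)" "d (n + 1) = (1 - h n) * h (n + 1)"
    using g h Suc.hyps by (auto simp: is_param_seq_def)
  moreover have "g n < 1"
    using g Suc.hyps by (cases "n = 1") (auto simp: is_param_seq_def)
  ultimately show ?case using Suc.IH by simp
qed

lemma max_param_seq_first_pos:
  assumes "has_multiple_param_seqs d" "is_max_param_seq d M"
  shows "M 1 > 0"
proof -
  obtain g h n where gh: "is_param_seq d g" "is_param_seq d h" and "n \<ge> 1" "g n \<noteq> h n"
    using assms(1) unfolding has_multiple_param_seqs_def by blast
  then have "g 1 \<noteq> h 1" using param_seq_eq_if_first_eq[OF gh] by blast
  moreover have "0 \<le> g 1" "0 \<le> h 1" using gh by (auto simp: is_param_seq_def)
  moreover have "g 1 \<le> M 1" "h 1 \<le> M 1" using assms(2) gh by (auto simp: is_max_param_seq_def)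
  ultimately show ?thesis by linarith
qed

lemma param_seq_bounds:
  assumes "is_param_seq d g" "g 1 > 0" "n \<ge> 1"
  shows "0 < g n" "g n < 1"
  using assms by (cases "n = 1"; auto simp: is_param_seq_def)+

fun wall_prod :: "(nat \<Rightarrow> real) \<Rightarrow> nat \<Rightarrow> real" where
  "wall_prod g 0 = 1"
| "wall_prod g (Suc k) = wall_prod g k * g (Suc k) / (1 - g (Suc k))"

lemma wall_prod_pos:
  assumes "\<And>n. n \<ge> 1 \<Longrightarrow> 0 < g n \<and> g n < 1"
  shows "wall_prod g k > 0"
  by (induction k) (use assms[of "Suc _"] in auto)

text \<open>With \<open>T n = B + 1 - \<Sum>\<^sub>1\<^sub>\<le>\<^sub>k\<^sub><\<^sub>n wall_prod g k\<close>,
  the larger sequence \<open>h\<close> is determined by \<open>1 - h n = (1 - g n) T(n+1) / T n\<close> and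
  \<open>h (n+1) = g (n+1) T n / T(n+1)\<close>, so the products \<open>(1 - h n) h (n+1)\<close> are unchanged.\<close>
lemma param_seq_above_if_wall_sums_bounded:
  assumes g: "is_param_seq d g" "g 1 > 0" and bounded: "\<And>n. (\<Sum>k\<le>n. wall_prod g k) \<le> B"
  shows "\<exists>h. is_param_seq d h \<and> g 1 < h 1"
proof -
  have g_bounds: "0 < g n" "g n < 1" if "n \<ge> 1" for n using param_seq_bounds[OF g that] by auto
  note wall_pos = wall_prod_pos[of g, OF conjI[OF g_bounds]]
  define T where "T n = B + 1 - (\<Sum>k\<in>{1..<n}. wall_prod g k)" for n
  have T_pos: "T n > 0" for n
  proof -
    have "(\<Sum>k\<in>{1..<n}. wall_prod g k) \<le> (\<Sum>k\<le>n. wall_prod g k)"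
      by (rule sum_mono2) (auto intro: less_imp_le wall_pos)
    then show ?thesis using bounded[of n] by (simp add: T_def)
  qed
  have T_Suc: "T (Suc n) = T n - wall_prod g n" if "n \<ge> 1" for n
    using that by (simp add: T_def)
  define h where "h n = g n + wall_prod g n * (1 - g n) / T n" for n
  have one_minus_h: "1 - h n = (1 - g n) * T (Suc n) / T n" if "n \<ge> 1" for n
    unfolding h_def T_Suc[OF that] using T_pos[of n] by (simp add: field_simps)
  have h_Suc: "h (Suc n) = g (Suc n) * T n / T (Suc n)" if "n \<ge> 1" for n
  proof -
    have "1 - g (Suc n) \<noteq> 0" using g_bounds[of "Suc n"] by simp
    moreover have "T n = T (Suc n) + wall_prod g n" using T_Suc[OF that] by simp
    ultimately show ?thesis
      unfolding h_def wall_prod.simps using T_pos[of "Suc n"] by (simp add: field_simps)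
  qed
  have h_bounds: "0 < h n \<and> h n < 1" if "n \<ge> 1" for n
  proof -
    have "h n > 0" unfolding h_def using g_bounds[OF that] wall_pos[of n] T_pos[of n]
      by (simp add: add_pos_nonneg)
    moreover have "1 - h n > 0" unfolding one_minus_h[OF that] using T_pos g_bounds[OF that] by simp
    ultimately show ?thesis by simp
  qed
  have "is_param_seq d h"
    unfolding is_param_seq_def
  proof (intro conjI allI impI)
    show "0 \<le> h 1" "h 1 < 1" using h_bounds[of 1] by auto
    show "0 < h n" "h n < 1" if "2 \<le> n" for n using h_bounds[of n] that by auto
    show "d (n + 1) = (1 - h n) * h (n + 1)" if "1 \<le> n" for n
      using g(1) that one_minus_h[OF that] h_Suc[OF that] T_pos[of n] T_pos[of "Suc n"]
      by (simp add: is_param_seq_def)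
  qed
  moreover have "g 1 < h 1" unfolding h_def using wall_pos[of 1] T_pos[of 1] g_bounds[of 1] by simp
  ultimately show ?thesis by blast
qed

lemma wall_sums_unbounded_if_max:
  assumes "is_max_param_seq d M" "M 1 > 0"
  shows "\<exists>n. B < (\<Sum>k\<le>n. wall_prod M k)"
proof (rule ccontr)
  assume "\<not> ?thesis"
  then obtain h where "is_param_seq d h" "M 1 < h 1"
    using param_seq_above_if_wall_sums_bounded[of d M B] assms
    by (auto simp: is_max_param_seq_def not_less)
  moreover from this(1) have "h 1 \<le> M 1" using assms(1) by (auto simp: is_max_param_seq_def)
  ultimately show False by simp
qed

section \<open>Measures with the prescribed Verblunsky coefficients\<close>

lemma nat_induct_two_step [case_names 0 1 step]:
  assumes "P 0" "P 1" "\<And>n. P n \<Longrightarrow> P (Suc n) \<Longrightarrow> P (Suc (Suc n))"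
  shows "P n"
proof -
  have "P n \<and> P (Suc n)" by (induction n) (use assms in auto)
  then show ?thesis ..
qed

fun cayley_scale :: "(nat \<Rightarrow> real) \<Rightarrow> nat \<Rightarrow> complex" where
  "cayley_scale c 0 = 1"
| "cayley_scale c (Suc n) = cayley_scale c n * (1 + \<i> * of_real (c (Suc n))) / 2"

text \<open>One step of Szeg\<H>o's recursion with coefficient \<open>t (1 - 2m + i x) / (1 + i x)\<close>, whose
  conjugate is \<open>t\<^sup>-\<^sup>1 (1 - 2m - i x) / (1 - i x)\<close> since \<open>\<bar>t\<bar> = 1\<close>, and with
  \<open>\<tau>\<^sub>n\<^sub>+\<^sub>1 = t (1 - i x) / (1 + i x)\<close>.\<close>
lemma para_orth_step_identity:
  fixes z F G t x m :: complex
  assumes "t \<noteq> 0" "1 + \<i> * x \<noteq> 0" "1 - \<i> * x \<noteq> 0"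
  shows "z * (z * F - t * ((1 - 2 * m + \<i> * x) / (1 + \<i> * x)) * G)
     - t * (1 - \<i> * x) / (1 + \<i> * x) * (G - inverse t * ((1 - 2 * m - \<i> * x) / (1 - \<i> * x)) * (z * F))
   = (z * ((1 + \<i> * x) * z + (1 - 2 * m - \<i> * x)) * F - t * ((1 - 2 * m + \<i> * x) * z + (1 - \<i> * x)) * G) / (1 + \<i> * x)"
proof -
  have "inverse t * t = 1" "inverse (1 - \<i> * x) * (1 - \<i> * x) = 1" "inverse (1 + \<i> * x) * (1 + \<i> * x) = 1"
    using assms by auto
  then show ?thesis unfolding divide_inverse by algebra
qed

lemma Phi_minus_rev_step_identity:
  fixes z F G t x m :: complex
  assumes "t \<noteq> 0" "1 + \<i> * x \<noteq> 0" "1 - \<i> * x \<noteq> 0"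
  shows "(z * F - t * ((1 - 2 * m + \<i> * x) / (1 + \<i> * x)) * G)
     - t * (1 - \<i> * x) / (1 + \<i> * x) * (G - inverse t * ((1 - 2 * m - \<i> * x) / (1 - \<i> * x)) * (z * F))
   = 2 * (1 - m) / (1 + \<i> * x) * (z * F - t * G)"
proof -
  have "inverse t * t = 1" "inverse (1 - \<i> * x) * (1 - \<i> * x) = 1" "inverse (1 + \<i> * x) * (1 + \<i> * x) = 1"
    using assms by auto
  then show ?thesis unfolding divide_inverse by algebra
qed

lemma cayley_step_identity:
  fixes a x m t z F G :: complex
  assumes "1 + \<i> * x \<noteq> 0"
  shows "a * (1 + \<i> * x) / 2 * ((z * ((1 + \<i> * x) * z + (1 - 2 * m - \<i> * x)) * F
          - t * ((1 - 2 * m + \<i> * x) * z + (1 - \<i> * x)) * G) / (1 + \<i> * x))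
    = ((1 + \<i> * x) * z + (1 - \<i> * x)) / 2 * (a * (z * F - t * G)) - m * z * (a * (F - t * G))"
proof -
  have cancel: "a * b / 2 * (N / b) = a * N / 2" if "b \<noteq> 0" for b N :: complex
    using that by (simp add: field_simps)
  show ?thesis unfolding cancel[OF assms] by (simp add: field_simps)
qed

locale prescribed_verblunsky = circle_measure \<nu> for \<nu> :: "complex measure" +
  fixes c d M :: "nat \<Rightarrow> real"
  assumes multiple: "has_multiple_param_seqs d"
    and maximal: "is_max_param_seq d M"
    and verblunsky_eq: "\<forall>n\<ge>1. verblunsky \<nu> (n - 1) =
      (1 / tau c (n - 1)) * ((1 - 2 * of_real (M n) - \<i> * of_real (c n)) / (1 - \<i> * of_real (c n)))"
begin

lemma M_bounds: "n \<ge> 1 \<Longrightarrow> 0 < M n" "n \<ge> 1 \<Longrightarrow> M n < 1"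
  using param_seq_bounds max_param_seq_first_pos[OF multiple maximal] maximal
  by (auto simp: is_max_param_seq_def)

lemma d_eq: "n \<ge> 1 \<Longrightarrow> d (n + 1) = (1 - M n) * M (n + 1)"
  using maximal by (auto simp: is_max_param_seq_def is_param_seq_def)

lemma cnj_szego_coeff_eq:
  "cnj (szego_coeff \<nu> n) = inverse (tau c n) *
     ((1 - 2 * of_real (M (Suc n)) - \<i> * of_real (c (Suc n))) / (1 - \<i> * of_real (c (Suc n))))"
  using verblunsky_eq[rule_format, of "Suc n"] by (simp add: verblunsky_eq_cnj_szego_coeff divide_inverse)

lemma szego_coeff_eq:
  "szego_coeff \<nu> n = tau c n *
     ((1 - 2 * of_real (M (Suc n)) + \<i> * of_real (c (Suc n))) / (1 + \<i> * of_real (c (Suc n))))"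
proof -
  have "cnj (inverse (tau c n)) = tau c n"
    using cnj_eq_inverse_if_norm_1[OF norm_tau, of c n] tau_nonzero[of c n]
    by (metis complex_cnj_cnj complex_cnj_inverse inverse_inverse_eq)
  then show ?thesis using arg_cong[OF cnj_szego_coeff_eq, of cnj] by simp
qed

lemma one_minus_norm_szego_coeff:
  "1 - cmod (szego_coeff \<nu> n) ^ 2 = 4 * M (Suc n) * (1 - M (Suc n)) / (1 + c (Suc n) ^ 2)"
proof -
  have "cmod (szego_coeff \<nu> n) =
      cmod (1 - 2 * of_real (M (Suc n)) + \<i> * of_real (c (Suc n))) / cmod (1 + \<i> * of_real (c (Suc n)))"
    unfolding szego_coeff_eq norm_mult norm_tau by (simp add: norm_divide)
  moreover have "cmod (1 - 2 * of_real (M (Suc n)) + \<i> * of_real (c (Suc n))) ^ 2 = (1 - 2 * M (Suc n)) ^ 2 + c (Suc n) ^ 2"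
    by (simp add: cmod_power2)
  moreover have "cmod (1 + \<i> * of_real (c (Suc n))) ^ 2 = 1 + c (Suc n) ^ 2"
    by (simp add: cmod_power2)
  moreover have "1 + c (Suc n) ^ 2 > 0" by (simp add: add_pos_nonneg)
  ultimately show ?thesis by (simp add: power_divide field_simps power2_eq_square)
qed

lemma szego_Phi_at_one:
  "cnj (poly (szego_Phi \<nu> k) 1) = poly (szego_Phi \<nu> k) 1 / tau c k \<and>
   poly (szego_Phi \<nu> (Suc k)) 1 = poly (szego_Phi \<nu> k) 1 * (2 * of_real (M (Suc k)) / (1 + \<i> * of_real (c (Suc k))))"
proof (induction k)
  case 0
  show ?case
    using one_plus_i_of_real_nonzero[of "c 1"]
    by (simp add: poly_szego_Phi_Suc szego_coeff_eq field_simps)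
next
  case (Suc k)
  let ?P = "poly (szego_Phi \<nu> k) 1" and ?P' = "poly (szego_Phi \<nu> (Suc k)) 1"
  let ?A = "(1 - 2 * of_real (M (Suc (Suc k))) + \<i> * of_real (c (Suc (Suc k)))) / (1 + \<i> * of_real (c (Suc (Suc k))))"
  have P': "?P' = ?P * (2 * of_real (M (Suc k)) / (1 + \<i> * of_real (c (Suc k))))"
    using Suc.IH by blast
  let ?a = "1 + \<i> * complex_of_real (c (Suc k))" and ?b = "1 - \<i> * complex_of_real (c (Suc k))"
  have "cnj ?P' = ?P / tau c k * (2 * of_real (M (Suc k)) / ?b)"
    unfolding P' using Suc.IH by simp
  also have "\<dots> = ?P * (2 * of_real (M (Suc k)) / ?a) * ?a / (tau c k * ?b)"
    using one_plus_i_of_real_nonzero[of "c (Suc k)"] by simp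
  also have "\<dots> = ?P' / tau c (Suc k)"
    unfolding P' by (simp add: divide_divide_eq_right)
  finally have cnj_P': "cnj ?P' = ?P' / tau c (Suc k)" .
  then have "poly (szego_Phi_rev \<nu> (Suc k)) 1 = ?P' / tau c (Suc k)"
    using poly_szego_Phi_rev_on_circle[of 1 "Suc k"] by simp
  then have "poly (szego_Phi \<nu> (Suc (Suc k))) 1 = ?P' - tau c (Suc k) * ?A * (?P' / tau c (Suc k))"
    unfolding poly_szego_Phi_Suc[of _ "Suc k"] szego_coeff_eq by (simp del: tau.simps)
  also have "\<dots> = ?P' * (1 - ?A)"
    using tau_nonzero[of c "Suc k"] by (simp del: tau.simps add: algebra_simps)
  also have "1 - ?A = 2 * of_real (M (Suc (Suc k))) / (1 + \<i> * of_real (c (Suc (Suc k))))"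
    using one_plus_i_of_real_nonzero by (simp add: field_simps)
  finally show ?case using cnj_P' by blast
qed

lemma norm_szego_Phi_at_one: "cmod (poly (szego_Phi \<nu> k) 1) ^ 2 = wall_prod M k * Phi_norm2 k"
proof (induction k)
  case 0
  show ?case by (simp add: Phi_norm2_0)
next
  case (Suc k)
  let ?m = "M (Suc k)" and ?c = "c (Suc k)"
  have "?m < 1" using M_bounds by auto
  have "cmod (poly (szego_Phi \<nu> (Suc k)) 1) ^ 2 = cmod (poly (szego_Phi \<nu> k) 1) ^ 2 * (4 * ?m ^ 2 / (1 + ?c ^ 2))"
    using szego_Phi_at_one[of k] by (simp add: norm_mult norm_divide power_mult_distrib power_divide cmod_power2)
  also have "\<dots> = wall_prod M k * ?m / (1 - ?m) * (4 * ?m * (1 - ?m) / (1 + ?c ^ 2) * Phi_norm2 k)"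
    unfolding Suc.IH using \<open>?m < 1\<close> by (simp add: power2_eq_square)
  finally show ?case by (simp add: Phi_norm2_Suc one_minus_norm_szego_coeff)
qed

lemma measure_one_eq_0: "measure \<nu> {1} = 0"
proof (rule ccontr)
  assume "measure \<nu> {1} \<noteq> 0"
  then have pos: "measure \<nu> {1} > 0" using measure_nonneg[of \<nu> "{1}"] by linarith
  obtain n where n: "1 / measure \<nu> {1} < (\<Sum>k\<le>n. wall_prod M k)"
    using wall_sums_unbounded_if_max[OF maximal] max_param_seq_first_pos[OF multiple maximal] by blast
  define K where "K = (\<Sum>k\<le>n. wall_prod M k)"
  have "K = (\<Sum>k\<le>n. cmod (poly (szego_Phi \<nu> k) 1) ^ 2 / Phi_norm2 k)"
    unfolding K_def norm_szego_Phi_at_one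
    by (intro sum.cong refl) (simp add: Phi_norm2_pos[THEN less_imp_neq, symmetric])
  then have "measure \<nu> {1} * K ^ 2 \<le> K" using measure_singleton_kernel_bound[of 1 n] by simp
  moreover have "K > 0" using pos n by (simp add: K_def) (smt (verit) divide_pos_pos)
  ultimately have "measure \<nu> {1} * K \<le> 1" by (simp add: power2_eq_square)
  then show False using n pos by (simp add: K_def field_simps)
qed

lemma AE_ne_one: "AE z in \<nu>. z \<noteq> 1"
proof -
  have "{1} \<in> null_sets \<nu>"
    using measure_one_eq_0 sets_eq_borel by (auto simp: null_sets_def emeasure_eq_measure)
  then show ?thesis using AE_not_in by fastforce
qed

definition para_orth :: "nat \<Rightarrow> complex \<Rightarrow> complex" where
  "para_orth n z = z * poly (szego_Phi \<nu> n) z - tau c n * poly (szego_Phi_rev \<nu> n) z"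

lemma para_orth_orth:
  assumes "1 \<le> k" "k \<le> n"
  shows "l2_inner \<nu> (para_orth n) (\<lambda>z. z ^ k) = 0"
proof -
  obtain m where k: "k = Suc m" using assms(1) by (cases k) auto
  have "para_orth n = (\<lambda>z. z * poly (szego_Phi \<nu> n) z - tau c n * poly (szego_Phi_rev \<nu> n) z)"
    by (rule ext) (simp add: para_orth_def)
  then have "l2_inner \<nu> (para_orth n) (\<lambda>z. z ^ k) =
      l2_inner \<nu> (\<lambda>z. z * poly (szego_Phi \<nu> n) z) (\<lambda>z. z ^ Suc m)
      - tau c n * l2_inner \<nu> (poly (szego_Phi_rev \<nu> n)) (\<lambda>z. z ^ k)"
    unfolding k l2_inner_scale_left[symmetric] by (simp add: l2_inner_diff_left continuous_intros)
  also have "\<dots> = 0"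
    using l2_inner_times_z[of "poly (szego_Phi \<nu> n)" m] szego_Phi_orth_monomials[of m n]
      l2_inner_reversed_monomial[OF poly_szego_Phi_rev_on_circle \<open>k \<le> n\<close>]
      szego_Phi_orth_monomials[of "n - k" n] assms k
    by (simp add: continuous_intros)
  finally show ?thesis .
qed

lemma para_orth_Suc:
  "para_orth (Suc n) z =
    (z * ((1 + \<i> * of_real (c (Suc n))) * z + (1 - 2 * of_real (M (Suc n)) - \<i> * of_real (c (Suc n)))) * poly (szego_Phi \<nu> n) z
     - tau c n * ((1 - 2 * of_real (M (Suc n)) + \<i> * of_real (c (Suc n))) * z + (1 - \<i> * of_real (c (Suc n)))) * poly (szego_Phi_rev \<nu> n) z)
    / (1 + \<i> * of_real (c (Suc n)))"
  unfolding para_orth_def poly_szego_Phi_Suc poly_szego_Phi_rev_Suc cnj_szego_coeff_eq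
  unfolding szego_coeff_eq tau.simps(2)
  by (rule para_orth_step_identity[OF tau_nonzero one_plus_i_of_real_nonzero one_minus_i_of_real_nonzero])

lemma szego_Phi_minus_rev_Suc:
  "poly (szego_Phi \<nu> (Suc n)) z - tau c (Suc n) * poly (szego_Phi_rev \<nu> (Suc n)) z
    = 2 * (1 - of_real (M (Suc n))) / (1 + \<i> * of_real (c (Suc n))) * para_orth n z"
  unfolding para_orth_def poly_szego_Phi_Suc poly_szego_Phi_rev_Suc cnj_szego_coeff_eq
  unfolding szego_coeff_eq tau.simps(2)
  by (rule Phi_minus_rev_step_identity[OF tau_nonzero one_plus_i_of_real_nonzero one_minus_i_of_real_nonzero])

lemma cayley_scale_Phi_minus_rev_Suc:
  "cayley_scale c (Suc k) * (poly (szego_Phi \<nu> (Suc k)) z - tau c (Suc k) * poly (szego_Phi_rev \<nu> (Suc k)) z)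
    = (1 - of_real (M (Suc k))) * (cayley_scale c k * para_orth k z)"
proof -
  have "a * b / 2 * (2 * (1 - m) / b * X) = (1 - m) * (a * X)" if "b \<noteq> 0" for a b m X :: complex
    using that by (simp add: field_simps)
  then show ?thesis
    unfolding szego_Phi_minus_rev_Suc cayley_scale.simps using one_plus_i_of_real_nonzero by blast
qed

lemma cayley_scale_para_orth_Suc:
  "cayley_scale c (Suc n) * para_orth (Suc n) z
    = ((1 + \<i> * of_real (c (Suc n))) * z + (1 - \<i> * of_real (c (Suc n)))) / 2
        * (cayley_scale c n * (z * poly (szego_Phi \<nu> n) z - tau c n * poly (szego_Phi_rev \<nu> n) z))
      - of_real (M (Suc n)) * z * (cayley_scale c n * (poly (szego_Phi \<nu> n) z - tau c n * poly (szego_Phi_rev \<nu> n) z))"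
  unfolding para_orth_Suc cayley_scale.simps(2)
  by (rule cayley_step_identity[OF one_plus_i_of_real_nonzero])

text \<open>The recurrence of \<open>cayley_Pn\<close> matches Szeg\<H>o's recursion because \<open>d\<^sub>n\<^sub>+\<^sub>1 = (1 - M\<^sub>n) M\<^sub>n\<^sub>+\<^sub>1\<close>.\<close>
lemma cayley_Pn_eq_para_orth: "(z - 1) * cayley_Pn c d n z = cayley_scale c n * para_orth n z"
proof (induction n rule: nat_induct_two_step)
  case 0
  show ?case by (simp add: para_orth_def)
next
  case 1
  let ?L = "((1 + \<i> * of_real (c 1)) * z + (1 - \<i> * of_real (c 1))) / 2"
  have "cayley_scale c 1 * para_orth 1 z = ?L * (z - 1)"
    using cayley_scale_para_orth_Suc[of 0 z] by (simp del: cayley_scale.simps(2))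
  moreover have "(z - 1) * cayley_Pn c d 1 z = ?L * (z - 1)" by simp
  ultimately show ?case by (simp only:)
next
  case (step k)
  have d: "complex_of_real (d (Suc (Suc k))) = (1 - of_real (M (Suc k))) * of_real (M (Suc (Suc k)))"
    using d_eq[of "Suc k"] by simp
  have "(z - 1) * cayley_Pn c d (Suc (Suc k)) z
      = ((1 + \<i> * of_real (c (Suc (Suc k)))) * z + (1 - \<i> * of_real (c (Suc (Suc k))))) / 2
          * ((z - 1) * cayley_Pn c d (Suc k) z)
        - of_real (d (Suc (Suc k))) * z * ((z - 1) * cayley_Pn c d k z)"
    by (simp add: algebra_simps)
  also have "\<dots> = ((1 + \<i> * of_real (c (Suc (Suc k)))) * z + (1 - \<i> * of_real (c (Suc (Suc k))))) / 2
          * (cayley_scale c (Suc k) * (z * poly (szego_Phi \<nu> (Suc k)) z - tau c (Suc k) * poly (szego_Phi_rev \<nu> (Suc k)) z))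
        - of_real (M (Suc (Suc k))) * z
          * (cayley_scale c (Suc k) * (poly (szego_Phi \<nu> (Suc k)) z - tau c (Suc k) * poly (szego_Phi_rev \<nu> (Suc k)) z))"
    unfolding step d cayley_scale_Phi_minus_rev_Suc by (simp add: para_orth_def algebra_simps)
  also have "\<dots> = cayley_scale c (Suc (Suc k)) * para_orth (Suc (Suc k)) z"
    by (rule cayley_scale_para_orth_Suc[symmetric])
  finally show ?case .
qed

lemma l2_inner_cayley_Pn_monomial_Suc:
  assumes "k < n"
  shows "l2_inner \<nu> (cayley_Pn c d n) (\<lambda>z. z ^ k) = l2_inner \<nu> (cayley_Pn c d n) (\<lambda>z. z ^ Suc k)"
proof -
  let ?R = "cayley_Pn c d n"
  have cont: "continuous_on UNIV ?R" by (rule continuous_on_cayley_Pn)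
  have "l2_inner \<nu> (\<lambda>z. (z - 1) * ?R z) (\<lambda>z. z ^ Suc k)
      = l2_inner \<nu> (\<lambda>z. z * ?R z) (\<lambda>z. z ^ Suc k) - l2_inner \<nu> ?R (\<lambda>z. z ^ Suc k)"
    unfolding left_diff_distrib mult_1_left by (rule l2_inner_diff_left) (intro continuous_intros cont)+
  also have "\<dots> = l2_inner \<nu> ?R (\<lambda>z. z ^ k) - l2_inner \<nu> ?R (\<lambda>z. z ^ Suc k)"
    using l2_inner_times_z[OF cont] by simp
  finally have "l2_inner \<nu> (\<lambda>z. (z - 1) * ?R z) (\<lambda>z. z ^ Suc k)
      = l2_inner \<nu> ?R (\<lambda>z. z ^ k) - l2_inner \<nu> ?R (\<lambda>z. z ^ Suc k)" .
  moreover have "l2_inner \<nu> (\<lambda>z. (z - 1) * ?R z) (\<lambda>z. z ^ Suc k) = 0"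
    using para_orth_orth[of "Suc k" n] assms
    by (simp add: cayley_Pn_eq_para_orth l2_inner_scale_left)
  ultimately show ?thesis by simp
qed

definition cayley_moment :: "nat \<Rightarrow> complex" where
  "cayley_moment n = l2_inner \<nu> (cayley_Pn c d n) (\<lambda>z. 1)"

lemma l2_inner_cayley_Pn_monomial: "k \<le> n \<Longrightarrow> l2_inner \<nu> (cayley_Pn c d n) (\<lambda>z. z ^ k) = cayley_moment n"
proof (induction k)
  case 0
  show ?case by (simp add: cayley_moment_def)
next
  case (Suc k)
  then show ?case using l2_inner_cayley_Pn_monomial_Suc[of k n] by simp
qed

lemma l2_inner_cayley_Pn_poly:
  assumes "degree q \<le> n"
  shows "l2_inner \<nu> (cayley_Pn c d n) (poly q) = cayley_moment n * cnj (poly q 1)"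
proof -
  have "l2_inner \<nu> (cayley_Pn c d n) (poly q) = (\<Sum>i\<le>degree q. cnj (coeff q i) * cayley_moment n)"
    unfolding l2_inner_poly_right[OF continuous_on_cayley_Pn]
    by (rule sum.cong) (use assms l2_inner_cayley_Pn_monomial in auto)
  also have "\<dots> = cayley_moment n * cnj (poly q 1)"
    by (simp add: poly_altdef sum_distrib_left mult.commute)
  finally show ?thesis .
qed

lemma l2_inner_one_one: "l2_inner \<nu> (\<lambda>z. 1) (\<lambda>z. 1) = 1"
  by (simp add: l2_inner_def prob_space)

lemma cayley_moment_0: "cayley_moment 0 = 1"
proof -
  have "cayley_Pn c d 0 = (\<lambda>z. 1)" by (rule ext) simp
  then show ?thesis using l2_inner_one_one by (simp add: cayley_moment_def)
qed

lemma cayley_moment_1: "cayley_moment 1 = 1 - of_real (M 1)"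
proof -
  let ?x = "complex_of_real (c 1)" and ?m = "complex_of_real (M 1)"
  let ?A = "(1 + \<i> * ?x) / 2" and ?B = "(1 - \<i> * ?x) / 2"
  have "cayley_Pn c d 1 = (\<lambda>z. ?A * z + ?B * 1)" by (rule ext) (simp add: field_simps)
  then have "cayley_moment 1 = ?A * l2_inner \<nu> (\<lambda>z. z) (\<lambda>z. 1) + ?B * l2_inner \<nu> (\<lambda>z. 1) (\<lambda>z. 1)"
    unfolding cayley_moment_def l2_inner_scale_left[symmetric]
    by (simp only:) (rule l2_inner_add_left; intro continuous_intros)
  also have "l2_inner \<nu> (\<lambda>z. z) (\<lambda>z. 1) = szego_coeff \<nu> 0"
  proof -
    have "poly (1 :: complex poly) = (\<lambda>z. 1)" by (rule ext) simp
    then show ?thesis using l2_inner_one_one by (simp add: szego_coeff_def)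
  qed
  also have "\<dots> = (1 - 2 * ?m + \<i> * ?x) / (1 + \<i> * ?x)"
    by (simp add: szego_coeff_eq)
  also have "?A * \<dots> = (1 - 2 * ?m + \<i> * ?x) / 2"
  proof -
    have "b / 2 * (N / b) = N / 2" if "b \<noteq> 0" for b N :: complex using that by simp
    then show ?thesis using one_plus_i_of_real_nonzero by blast
  qed
  also have "(1 - 2 * ?m + \<i> * ?x) / 2 + ?B * l2_inner \<nu> (\<lambda>z. 1) (\<lambda>z. 1) = 1 - ?m"
    using l2_inner_one_one by (simp add: field_simps)
  finally show ?thesis .
qed

lemma cayley_moment_Suc_Suc:
  "cayley_moment (Suc (Suc n)) = cayley_moment (Suc n) - of_real (d (n + 2)) * cayley_moment n"
proof -
  let ?x = "complex_of_real (c (n + 2))" and ?D = "complex_of_real (d (n + 2))"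
  let ?A = "(1 + \<i> * ?x) / 2" and ?B = "(1 - \<i> * ?x) / 2"
  let ?R1 = "cayley_Pn c d (Suc n)" and ?R0 = "cayley_Pn c d n"
  have cont: "continuous_on UNIV ?R1" "continuous_on UNIV ?R0" by (rule continuous_on_cayley_Pn)+
  have int: "integrable \<nu> (\<lambda>z. ?A * (?R1 z * cnj 1))" "integrable \<nu> (\<lambda>z. ?B * (?R1 z * cnj (z ^ 1)))"
    "integrable \<nu> (\<lambda>z. ?D * (?R0 z * cnj 1))"
    using cont by (auto intro!: integrable_continuous continuous_intros)
  have "cayley_moment (Suc (Suc n)) = l2_inner \<nu> (cayley_Pn c d (Suc (Suc n))) (\<lambda>z. z ^ 1)"
    using l2_inner_cayley_Pn_monomial[of 1 "Suc (Suc n)"] by simp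
  also have "\<dots> = (\<integral>z. ?A * (?R1 z * cnj 1) + ?B * (?R1 z * cnj (z ^ 1)) - ?D * (?R0 z * cnj 1) \<partial>\<nu>)"
  proof (rule l2_inner_eq_integral_on_circle)
    fix z :: complex assume z: "cmod z = 1"
    then have "z \<noteq> 0" by auto
    then show "cayley_Pn c d (Suc (Suc n)) z * cnj (z ^ 1) = ?A * (?R1 z * cnj 1) + ?B * (?R1 z * cnj (z ^ 1)) - ?D * (?R0 z * cnj 1)"
      by (simp add: cnj_eq_inverse_if_norm_1[OF z] field_simps)
  qed (use cont continuous_on_cayley_Pn in \<open>auto intro!: continuous_intros\<close>)
  also have "\<dots> = ?A * l2_inner \<nu> ?R1 (\<lambda>z. 1) + ?B * l2_inner \<nu> ?R1 (\<lambda>z. z ^ 1) - ?D * l2_inner \<nu> ?R0 (\<lambda>z. 1)"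
    unfolding l2_inner_def Bochner_Integration.integral_diff[OF Bochner_Integration.integrable_add[OF int(1,2)] int(3)]
      Bochner_Integration.integral_add[OF int(1,2)] integral_mult_right_zero by simp
  also have "l2_inner \<nu> ?R1 (\<lambda>z. z ^ 1) = cayley_moment (Suc n)"
    using l2_inner_cayley_Pn_monomial[of 1 "Suc n"] by simp
  finally show ?thesis unfolding cayley_moment_def by (simp add: field_simps)
qed

lemma cayley_moment_eq_gam: "cayley_moment n = of_real (gam M n)"
proof (induction n rule: nat_induct_two_step)
  case 0
  show ?case by (simp add: cayley_moment_0)
next
  case 1
  show ?case using cayley_moment_1 by simp
next
  case (step k)
  have d: "complex_of_real (d (k + 2)) = (1 - complex_of_real (M (Suc k))) * complex_of_real (M (Suc (Suc k)))"
    using d_eq[of "Suc k"] by simp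
  show ?case unfolding cayley_moment_Suc_Suc step d by (simp add: algebra_simps)
qed

lemma Pn_moments:
  assumes "j \<le> n"
  shows "integrable (cayley_push \<nu>) (\<lambda>x. x ^ j * Pn c d n x / (x\<^sup>2 + 1) ^ n)"
    and "(\<integral>x. x ^ j * Pn c d n x / (x\<^sup>2 + 1) ^ n \<partial>cayley_push \<nu>) = (if n = j then gam M n else 0)"
proof -
  define Q :: "complex poly" where "Q = [:1, 1:] ^ j * [:-1, 1:] ^ (n - j)"
  define K where "K = \<i> ^ j * (-1) ^ (n - j) / (2 * \<i>) ^ n"
  have poly_Q: "poly Q z = (z + 1) ^ j * (z - 1) ^ (n - j)" for z
    by (simp add: Q_def poly_power algebra_simps)
  have "degree Q \<le> n"
    unfolding Q_def using \<open>j \<le> n\<close>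
    by (intro order.trans[OF degree_mult_le] order.trans[OF add_mono[OF degree_power_le degree_power_le]]) simp
  have "(x::real)\<^sup>2 + 1 \<noteq> 0" for x by (metis add_nonneg_pos power2_less_0 zero_less_one not_le order_less_irrefl)
  then have cont: "continuous_on UNIV (\<lambda>x. x ^ j * Pn c d n x / (x\<^sup>2 + 1) ^ n)"
    by (intro continuous_intros continuous_on_Pn) auto
  note transfer = integral_cayley_push[OF cont _ AE_ne_one, of "\<lambda>z. K * (cayley_Pn c d n z * cnj (poly Q z))"]
  have integrand: "complex_of_real (x ^ j * Pn c d n x / (x\<^sup>2 + 1) ^ n) = K * (cayley_Pn c d n z * cnj (poly Q z))"
    if "cmod z = 1" "z \<noteq> 1" "x = Re (\<i> * (z + 1) / (z - 1))" for x z
    unfolding that(3) K_def poly_Q by (rule Pn_integrand_cayley[OF that(1,2) \<open>j \<le> n\<close>])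
  show "integrable (cayley_push \<nu>) (\<lambda>x. x ^ j * Pn c d n x / (x\<^sup>2 + 1) ^ n)"
    using integrand by (intro transfer(1)) (auto intro!: continuous_intros continuous_on_cayley_Pn)
  have "(\<integral>x. x ^ j * Pn c d n x / (x\<^sup>2 + 1) ^ n \<partial>cayley_push \<nu>)
      = Re (K * l2_inner \<nu> (cayley_Pn c d n) (poly Q))"
    using integrand by (subst transfer(2)) (auto intro!: continuous_intros continuous_on_cayley_Pn simp: l2_inner_def)
  also have "\<dots> = Re (K * cnj (poly Q 1) * of_real (gam M n))"
    using l2_inner_cayley_Pn_poly[OF \<open>degree Q \<le> n\<close>] by (simp add: cayley_moment_eq_gam mult_ac)
  also have "\<dots> = (if n = j then gam M n else 0)"
  proof (cases "n = j")
    case True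
    then have "K * cnj (poly Q 1) = 1" by (simp add: K_def poly_Q power_mult_distrib)
    then show ?thesis using True by simp
  next
    case False
    then show ?thesis using \<open>j \<le> n\<close> by (simp add: poly_Q)
  qed
  finally show "(\<integral>x. x ^ j * Pn c d n x / (x\<^sup>2 + 1) ^ n \<partial>cayley_push \<nu>) = (if n = j then gam M n else 0)" .
qed

end

theorem theorem1p2:
  fixes c d M :: "nat \<Rightarrow> real" and \<nu> :: "complex measure"
  assumes "positive_chain_seq d"
    and "has_multiple_param_seqs d"
    and "is_max_param_seq d M"
    and "nontrivial_prob_on_circle \<nu>"
    and "\<forall>n\<ge>1. verblunsky \<nu> (n - 1) =
           (1 / tau c (n - 1)) * ((1 - 2 * of_real (M n) - \<i> * of_real (c n)) / (1 - \<i> * of_real (c n)))"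
  shows "\<forall>n j. j \<le> n \<longrightarrow>
           integrable (cayley_push \<nu>) (\<lambda>x. x ^ j * Pn c d n x / (x\<^sup>2 + 1) ^ n) \<and>
           (\<integral>x. x ^ j * Pn c d n x / (x\<^sup>2 + 1) ^ n \<partial>cayley_push \<nu>) = (if n = j then gam M n else 0)"
proof -
  interpret prescribed_verblunsky \<nu> c d M
    using circle_measure_if_nontrivial[OF assms(4)] assms(2,3,5)
    by (simp add: prescribed_verblunsky_def prescribed_verblunsky_axioms_def)
  show ?thesis using Pn_moments by blast
qed

end
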